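(* The class $\mathcal{S}^*_{car}$ satisfies the following: (i) $\mathcal{S}^*_{car}\subset\mathcal{S}^*(\alpha)$ for $0\le\alpha\le 1/4$; (ii) $\mathcal{S}^*_{car}\subset\mathcal{SS}^*(\beta)$ for $\beta_0\le\beta\le 1$, where $\beta_0=(2/\pi)\tan^{-1}(3\sqrt{3/5})$; (iii) $k\text{-}\mathcal{S}^*\subset\mathcal{S}^*_{car}$ for $k\ge 5/3$; (iv) $\mathcal{S}^*_e(\alpha)\subset\mathcal{S}^*_{car}$ for $\alpha_0\le\alpha<1$, where $\alpha_0=(e-2)/(2(e-1))$; (v) $\mathcal{S}^*_L(\alpha)\subset\mathcal{S}^*_{car}$ for $1/2\le\alpha<1$; (vi) $\mathcal{S}^*(\sqrt{1+cz})\subset\mathcal{S}^*_{car}$ for $0<c\le 3/4$; (vii) $\mathcal{S}^*[A,B]\subset\mathcal{S}^*_{car}$, where $-1<B<A\le 1$, if one of the following holds: (a) $1-B^2<2(1-AB)\le 3(1-B^2)$ and $2A\le 1+B$; (b) $3(1-B^2)\le 2(1-AB)<5(1-B^2)$ and $2A\le 3+5B$; (viii) $\mathcal{S}^*_{car}\subset\mathcal{S}^*[1,-(M-1)/M]$ for $M\ge(3+\sqrt5)/4$.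
   Context: $\mathbb{D}=\{z:|z|<1\}$; $\mathcal{A}$ is the class of analytic $f$ on $\mathbb{D}$ with $f(0)=0$, $f'(0)=1$. $F\prec G$ means $F=G\circ w$ for an analytic $w:\mathbb{D}\to\mathbb{D}$ with $w(0)=0$. For an analytic $\varphi$ on $\mathbb{D}$, $\mathcal{S}^*(\varphi)$ denotes the class of $f\in\mathcal{A}$ with $zf'(z)/f(z)\prec\varphi(z)$ in $\mathbb{D}$. Square roots and powers are principal branches. Classes: $\mathcal{S}^*_{car}=\mathcal{S}^*(1+z+z^2/2)$; $\mathcal{S}^*(\alpha)$ is the class of $f\in\mathcal{A}$ with $\operatorname{Re}(zf'(z)/f(z))>\alpha$ on $\mathbb{D}$; $\mathcal{SS}^*(\beta)=\mathcal{S}^*(((1+z)/(1-z))^\beta)$, i.e. $f\in\mathcal{A}$ with $|\arg(zf'(z)/f(z))|<\beta\pi/2$; for $k\ge0$, $k\text{-}\mathcal{S}^*$ is the class of $f\in\mathcal{A}$ with $\operatorname{Re}(zf'(z)/f(z))>k|zf'(z)/f(z)-1|$ on $\mathbb{D}$; $\mathcal{S}^*_e(\alpha)=\mathcal{S}^*(\alpha+(1-\alpha)e^z)$ and $\mathcal{S}^*_L(\alpha)=\mathcal{S}^*(\alpha+(1-\alpha)\sqrt{1+z})$ for $0\le\alpha<1$; $\mathcal{S}^*(\sqrt{1+cz})$ for $0<c\le1$; for $-1\le B<A\le1$, $\mathcal{S}^*[A,B]=\mathcal{S}^*((1+Az)/(1+Bz))$. *)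

theory Defs
  imports "HOL-Analysis.Analysis"
begin

definition classA :: "(complex \<Rightarrow> complex) set" where
  "classA = {f. f holomorphic_on ball 0 1 \<and> f 0 = 0 \<and> deriv f 0 = 1}"

definition subord :: "(complex \<Rightarrow> complex) \<Rightarrow> (complex \<Rightarrow> complex) \<Rightarrow> bool" where
  "subord F G \<longleftrightarrow> (\<exists>w. w holomorphic_on ball 0 1 \<and> w ` ball 0 1 \<subseteq> ball 0 1 \<and> w 0 = 0 \<and>
      (\<forall>z\<in>ball 0 1. F z = G (w z)))"

text \<open>The function z f'(z)/f(z), with its removable value 1 at the origin.\<close>
definition zdlog :: "(complex \<Rightarrow> complex) \<Rightarrow> complex \<Rightarrow> complex" where
  "zdlog f z = (if z = 0 then 1 else z * deriv f z / f z)"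

text \<open>\<open>S*(phi)\<close>: f in A, f nonvanishing on the punctured disk (so that zf'/f is analytic),
  and zf'/f subordinate to phi.\<close>
definition Sstar :: "(complex \<Rightarrow> complex) \<Rightarrow> (complex \<Rightarrow> complex) set" where
  "Sstar \<phi> = {f. f \<in> classA \<and> (\<forall>z\<in>ball 0 1 - {0}. f z \<noteq> 0) \<and> subord (zdlog f) \<phi>}"

definition Scar :: "(complex \<Rightarrow> complex) set" where
  "Scar = Sstar (\<lambda>z. 1 + z + z^2 / 2)"

definition Sstar_ord :: "real \<Rightarrow> (complex \<Rightarrow> complex) set" where
  "Sstar_ord \<alpha> = {f. f \<in> classA \<and> (\<forall>z\<in>ball 0 1 - {0}. f z \<noteq> 0) \<and>
      (\<forall>z\<in>ball 0 1. Re (zdlog f z) > \<alpha>)}"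

definition SSstar :: "real \<Rightarrow> (complex \<Rightarrow> complex) set" where
  "SSstar \<beta> = Sstar (\<lambda>z. ((1 + z) / (1 - z)) powr (complex_of_real \<beta>))"

definition kSstar :: "real \<Rightarrow> (complex \<Rightarrow> complex) set" where
  "kSstar k = {f. f \<in> classA \<and> (\<forall>z\<in>ball 0 1 - {0}. f z \<noteq> 0) \<and>
      (\<forall>z\<in>ball 0 1. Re (zdlog f z) > k * cmod (zdlog f z - 1))}"

definition Sstar_e :: "real \<Rightarrow> (complex \<Rightarrow> complex) set" where
  "Sstar_e \<alpha> = Sstar (\<lambda>z. of_real \<alpha> + (1 - of_real \<alpha>) * exp z)"

definition Sstar_L :: "real \<Rightarrow> (complex \<Rightarrow> complex) set" where
  "Sstar_L \<alpha> = Sstar (\<lambda>z. of_real \<alpha> + (1 - of_real \<alpha>) * csqrt (1 + z))"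

definition Sstar_sqrt :: "real \<Rightarrow> (complex \<Rightarrow> complex) set" where
  "Sstar_sqrt c = Sstar (\<lambda>z. csqrt (1 + of_real c * z))"

definition Sstar_AB :: "real \<Rightarrow> real \<Rightarrow> (complex \<Rightarrow> complex) set" where
  "Sstar_AB A B = Sstar (\<lambda>z. (1 + of_real A * z) / (1 + of_real B * z))"

end

theory Submission
  imports Defs "HOL-Complex_Analysis.Cauchy_Integral_Formula"
begin

text \<open>
  Write \<open>\<phi> z = 1 + z + z\<^sup>2/2\<close>. Since \<open>2 \<phi> z - 1 = (1 + z)\<^sup>2\<close>, the function \<open>\<phi>\<close> maps the
  unit disk onto the set of \<open>p\<close> with \<open>2 p - 1\<close> in the cardioid obtained by squaring the disk
  \<open>\<bar>s - 1\<bar> < 1\<close>, and an analytic \<open>p\<close> with \<open>p 0 = 1\<close> taking its values there is subordinate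
  to \<open>\<phi>\<close>, with Schwarz function \<open>csqrt (2 p - 1) - 1\<close>. Each inclusion into \<open>Scar\<close> therefore
  reduces to locating the values of the defining function. For \<open>kSstar\<close>, \<open>Sstar_L\<close>,
  \<open>Sstar_sqrt\<close> and \<open>Sstar_AB\<close> they lie in the disk \<open>\<bar>p - 3/2\<bar> < 1\<close>, which is inside the
  cardioid domain. For \<open>Sstar_e\<close> the extremal parameter \<open>(e - 2) / (2 (e - 1))\<close> is handled by
  a convexity argument in \<open>Re z\<close>, and larger parameters follow because the cardioid is
  starlike about 1. Conversely, \<open>Re \<phi> > 1/4\<close>, \<open>\<bar>Im \<phi>\<bar> < 3 \<surd>(3/5) Re \<phi>\<close> and \<open>\<bar>\<phi> - M\<bar> < M\<close>
  give the inclusions of \<open>Scar\<close> into \<open>Sstar_ord\<close>, \<open>SSstar\<close> and \<open>Sstar_AB 1 (-(M - 1) / M)\<close>,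
  the last disk being the image of the unit disk under the corresponding Janowski function.
\<close>

section \<open>Subordination for starlike classes\<close>

lemma zdlog_holomorphic:
  assumes "f \<in> classA" and "\<forall>z\<in>ball 0 1 - {0}. f z \<noteq> 0"
  shows "zdlog f holomorphic_on ball 0 1"
proof -
  have f: "f holomorphic_on ball 0 1" "f 0 = 0" "deriv f 0 = 1"
    using assms(1) by (auto simp: classA_def)
  define g where "g z = (if z = 0 then deriv f 0 else (f z - f 0) / (z - 0))" for z
  have "g holomorphic_on ball 0 1"
    unfolding g_def by (rule pole_lemma_open) (auto simp: f)
  moreover have "\<forall>z\<in>ball 0 1. g z \<noteq> 0"
    using assms(2) f by (auto simp: g_def)
  ultimately have "(\<lambda>z. deriv f z / g z) holomorphic_on ball 0 1"
    by (intro holomorphic_intros holomorphic_deriv f) auto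
  moreover have "deriv f z / g z = zdlog f z" if "z \<in> ball 0 1" for z
    using f by (auto simp: zdlog_def g_def)
  ultimately show ?thesis
    by (rule holomorphic_transform)
qed

lemma zdlog_0 [simp]: "zdlog f 0 = 1"
  by (simp add: zdlog_def)

lemma subord_image_subset: "subord F G \<Longrightarrow> F ` ball 0 1 \<subseteq> G ` ball 0 1"
  unfolding subord_def by blast

lemma Sstar_subset_Sstar_if_subord:
  assumes "\<And>p. p holomorphic_on ball 0 1 \<Longrightarrow> p 0 = 1 \<Longrightarrow> p ` ball 0 1 \<subseteq> \<psi> ` ball 0 1 \<Longrightarrow>
      subord p \<omega>"
  shows "Sstar \<psi> \<subseteq> Sstar \<omega>"
proof
  fix f assume "f \<in> Sstar \<psi>"
  then have f: "f \<in> classA" "\<forall>z\<in>ball 0 1 - {0}. f z \<noteq> 0" and sub: "subord (zdlog f) \<psi>"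
    by (auto simp: Sstar_def)
  have "subord (zdlog f) \<omega>"
    by (rule assms[OF zdlog_holomorphic[OF f] zdlog_0 subord_image_subset[OF sub]])
  with f show "f \<in> Sstar \<omega>"
    by (simp add: Sstar_def)
qed

lemma Sstar_subset_Sstar_ord:
  assumes "\<And>\<zeta>. \<zeta> \<in> ball 0 1 \<Longrightarrow> \<alpha> < Re (\<psi> \<zeta>)"
  shows "Sstar \<psi> \<subseteq> Sstar_ord \<alpha>"
proof
  fix f assume "f \<in> Sstar \<psi>"
  then have f: "f \<in> classA" "\<forall>z\<in>ball 0 1 - {0}. f z \<noteq> 0" and "subord (zdlog f) \<psi>"
    by (auto simp: Sstar_def)
  from \<open>subord (zdlog f) \<psi>\<close> have "zdlog f ` ball 0 1 \<subseteq> \<psi> ` ball 0 1"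
    by (rule subord_image_subset)
  then have "\<alpha> < Re (zdlog f z)" if "z \<in> ball 0 1" for z
  proof -
    from that \<open>zdlog f ` ball 0 1 \<subseteq> \<psi> ` ball 0 1\<close>
    obtain \<zeta> where "\<zeta> \<in> ball 0 1" "zdlog f z = \<psi> \<zeta>"
      by blast
    with assms show ?thesis
      by simp
  qed
  with f show "f \<in> Sstar_ord \<alpha>"
    by (simp add: Sstar_ord_def)
qed

section \<open>The cardioid\<close>

text \<open>In polar coordinates \<open>v = \<rho> e\<^sup>i\<^sup>\<theta>\<close> the condition reads \<open>\<rho> < 2 (1 + cos \<theta>)\<close>.\<close>
definition cardioid :: "complex set" where
  "cardioid = {v. (cmod (v - 1))\<^sup>2 < 1 + 2 * cmod v}"

lemma csqrt_in_ball_if_cardioid: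
  assumes "v \<in> cardioid"
  shows "cmod (csqrt v - 1) < 1"
proof -
  define t where "t = csqrt v"
  define a b where "a = Re t" and "b = Im t"
  have "a \<ge> 0"
    unfolding a_def t_def by (rule Re_csqrt)
  have v: "v = t\<^sup>2"
    by (simp add: t_def)
  have "(cmod (v - 1))\<^sup>2 = (a\<^sup>2 - b\<^sup>2 - 1)\<^sup>2 + (2*a*b)\<^sup>2"
    unfolding v cmod_power2 a_def b_def by (simp add: power2_eq_square algebra_simps)
  moreover have "cmod v = a\<^sup>2 + b\<^sup>2"
    unfolding v norm_power cmod_power2 a_def b_def by simp
  ultimately have "(a\<^sup>2 + b\<^sup>2)\<^sup>2 < (2*a)\<^sup>2"
    using assms by (simp add: cardioid_def power2_eq_square algebra_simps)
  then have "a\<^sup>2 + b\<^sup>2 < 2*a"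
    by (rule power_less_imp_less_base) (use \<open>a \<ge> 0\<close> in simp)
  then have "(cmod (t - 1))\<^sup>2 < 1"
    unfolding cmod_power2 a_def b_def by (simp add: power2_eq_square algebra_simps)
  then show ?thesis
    by (simp add: t_def abs_square_less_1)
qed

lemma cardioid_disjoint_nonpos_Reals:
  assumes "v \<in> cardioid"
  shows "v \<notin> \<real>\<^sub>\<le>\<^sub>0"
proof
  assume "v \<in> \<real>\<^sub>\<le>\<^sub>0"
  then obtain r where r: "r \<le> 0" "v = of_real r"
    by (auto elim!: nonpos_Reals_cases)
  then have "(cmod (v - 1))\<^sup>2 = (1 - r)\<^sup>2" and "cmod v = - r"
    unfolding cmod_power2 by (simp_all add: power2_eq_square algebra_simps)
  with assms show False
    by (simp add: cardioid_def power2_eq_square algebra_simps)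
qed

lemma subord_car_if_cardioid:
  assumes "p holomorphic_on ball 0 1" and "p 0 = 1"
    and "\<And>z. z \<in> ball 0 1 \<Longrightarrow> 2 * p z - 1 \<in> cardioid"
  shows "subord p (\<lambda>z. 1 + z + z\<^sup>2/2)"
  unfolding subord_def
proof (intro exI[of _ "\<lambda>z. csqrt (2 * p z - 1) - 1"] conjI ballI)
  show "(\<lambda>z. csqrt (2 * p z - 1) - 1) holomorphic_on ball 0 1"
    using assms cardioid_disjoint_nonpos_Reals by (intro holomorphic_intros) auto
  show "(\<lambda>z. csqrt (2 * p z - 1) - 1) ` ball 0 1 \<subseteq> ball 0 1"
    using assms(3) csqrt_in_ball_if_cardioid by (auto simp: dist_norm norm_minus_commute)
  show "csqrt (2 * p 0 - 1) - 1 = 0"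
    using assms(2) by simp
  fix z :: complex
  have "(csqrt (2 * p z - 1))\<^sup>2 = 2 * p z - 1"
    by simp
  then show "p z = 1 + (csqrt (2 * p z - 1) - 1) + (csqrt (2 * p z - 1) - 1)\<^sup>2/2"
    by (simp add: power2_eq_square field_simps)
qed

lemma Sstar_subset_Scar:
  assumes "\<And>\<zeta>. \<zeta> \<in> ball 0 1 \<Longrightarrow> 2 * \<psi> \<zeta> - 1 \<in> cardioid"
  shows "Sstar \<psi> \<subseteq> Scar"
  unfolding Scar_def
proof (rule Sstar_subset_Sstar_if_subord)
  fix p assume p: "p holomorphic_on ball 0 1" "p 0 = 1" "p ` ball 0 1 \<subseteq> \<psi> ` ball 0 1"
  show "subord p (\<lambda>z. 1 + z + z\<^sup>2/2)"
  proof (rule subord_car_if_cardioid[OF p(1,2)])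
    fix z :: complex assume "z \<in> ball 0 1"
    with p(3) obtain \<zeta> where "\<zeta> \<in> ball 0 1" "p z = \<psi> \<zeta>"
      by blast
    with assms show "2 * p z - 1 \<in> cardioid"
      by simp
  qed
qed

lemma cardioid_if_near_three_halves:
  assumes "cmod (p - 3/2) < 1"
  shows "2 * p - 1 \<in> cardioid"
proof -
  define v where "v = 2 * p - 1"
  have "v - 2 = 2 * (p - 3/2)"
    by (simp add: v_def)
  then have "cmod (v - 2) < 2"
    using assms by (simp only: norm_mult) simp
  then have "(cmod (v - 2))\<^sup>2 < 2\<^sup>2"
    by (intro power_strict_mono) auto
  then have "(cmod (v - 1))\<^sup>2 < 1 + 2 * Re v"
    unfolding cmod_power2 by (simp add: power2_eq_square algebra_simps)
  also have "\<dots> \<le> 1 + 2 * cmod v"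
    using complex_Re_le_cmod[of v] by simp
  finally show ?thesis
    by (simp add: cardioid_def v_def)
qed

lemma cardioid_iff:
  "v \<in> cardioid \<longleftrightarrow>
    cmod (v - 1) < 1 \<or> (cmod (v - 1))^4 - 6 * (cmod (v - 1))\<^sup>2 - 3 < 8 * Re (v - 1)"
proof -
  define \<rho> X where "\<rho> = cmod (v - 1)" and "X = Re (v - 1)"
  have norm_v: "(cmod v)\<^sup>2 = 1 + 2 * X + \<rho>\<^sup>2"
    unfolding \<rho>_def X_def cmod_power2 by (simp add: power2_eq_square algebra_simps)
  show ?thesis
  proof (cases "\<rho> < 1")
    case True
    then have "\<rho>\<^sup>2 < 1"
      by (simp add: \<rho>_def abs_square_less_1)
    then have "(cmod (v - 1))\<^sup>2 < 1 + 2 * cmod v"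
      using norm_ge_zero[of v] unfolding \<rho>_def by linarith
    with True show ?thesis
      by (simp add: cardioid_def \<rho>_def)
  next
    case False
    then have "0 \<le> \<rho>\<^sup>2 - 1"
      by (simp add: one_le_power)
    have "v \<in> cardioid \<longleftrightarrow> \<rho>\<^sup>2 - 1 < 2 * cmod v"
      by (simp add: cardioid_def \<rho>_def diff_less_eq add.commute)
    also have "\<dots> \<longleftrightarrow> (\<rho>\<^sup>2 - 1)\<^sup>2 < (2 * cmod v)\<^sup>2"
    proof
      assume "\<rho>\<^sup>2 - 1 < 2 * cmod v"
      with \<open>0 \<le> \<rho>\<^sup>2 - 1\<close> show "(\<rho>\<^sup>2 - 1)\<^sup>2 < (2 * cmod v)\<^sup>2"
        by (intro power_strict_mono) auto
    next
      assume "(\<rho>\<^sup>2 - 1)\<^sup>2 < (2 * cmod v)\<^sup>2"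
      then show "\<rho>\<^sup>2 - 1 < 2 * cmod v"
        by (rule power_less_imp_less_base) simp
    qed
    also have "\<dots> \<longleftrightarrow> \<rho>^4 - 6 * \<rho>\<^sup>2 - 3 < 8 * X"
      unfolding power_mult_distrib norm_v by (simp add: power2_eq_square power4_eq_xxxx algebra_simps)
    finally show ?thesis
      using False by (simp add: \<rho>_def X_def)
  qed
qed

lemma quartic_quotient_mono:
  fixes s t :: real
  assumes "1 \<le> s" and "s \<le> t"
  shows "(s^4 - 6 * s\<^sup>2 - 3) / s \<le> (t^4 - 6 * t\<^sup>2 - 3) / t"
proof -
  have "3 * (s * t) \<le> t\<^sup>2 + s * t + s\<^sup>2"
    using sum_squares_bound[of s t] by (simp add: mult.assoc)
  then have "s * t * (3 * (s * t)) \<le> s * t * (t\<^sup>2 + s * t + s\<^sup>2)"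
    using assms by (intro mult_left_mono) auto
  then have "0 \<le> s * t * (t\<^sup>2 + s * t + s\<^sup>2) - 6 * s * t + 3"
    using zero_le_power2[of "s * t - 1"] by (simp add: power2_eq_square algebra_simps)
  then have "0 \<le> (t - s) * (s * t * (t\<^sup>2 + s * t + s\<^sup>2) - 6 * s * t + 3)"
    using assms by simp
  also have "\<dots> = s * (t^4 - 6 * t\<^sup>2 - 3) - t * (s^4 - 6 * s\<^sup>2 - 3)"
    by (simp add: power2_eq_square power4_eq_xxxx algebra_simps)
  finally show ?thesis
    using assms by (simp add: divide_simps mult.commute)
qed

lemma cardioid_starlike:
  assumes "v \<in> cardioid" and "0 \<le> l" and "l \<le> 1"
  shows "1 + of_real l * (v - 1) \<in> cardioid"
proof -
  define \<rho> X where "\<rho> = cmod (v - 1)" and "X = Re v - 1"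
  have w: "1 + of_real l * (v - 1) \<in> cardioid \<longleftrightarrow>
      l * \<rho> < 1 \<or> (l * \<rho>)^4 - 6 * (l * \<rho>)\<^sup>2 - 3 < 8 * (l * X)"
    using assms(2) unfolding cardioid_iff by (simp add: \<rho>_def X_def norm_mult)
  show ?thesis
  proof (cases "l * \<rho> < 1")
    case True
    then show ?thesis
      by (simp add: w)
  next
    case False
    then have "1 \<le> l * \<rho>" and "l * \<rho> \<le> \<rho>"
      using assms(2,3) mult_left_le_one_le[of \<rho> l] by (simp_all add: \<rho>_def)
    then have "0 < l * \<rho>"
      by linarith
    with assms(2) have "0 < l" and "0 < \<rho>"
      by (auto simp: zero_less_mult_iff)
    from \<open>1 \<le> l * \<rho>\<close> \<open>l * \<rho> \<le> \<rho>\<close> have "\<rho>^4 - 6 * \<rho>\<^sup>2 - 3 < 8 * X"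
      using assms(1) by (simp add: cardioid_iff \<rho>_def X_def)
    have "(l * \<rho>)^4 - 6 * (l * \<rho>)\<^sup>2 - 3 = l * \<rho> * (((l * \<rho>)^4 - 6 * (l * \<rho>)\<^sup>2 - 3) / (l * \<rho>))"
      using \<open>0 < l\<close> \<open>0 < \<rho>\<close> by simp
    also have "\<dots> \<le> l * \<rho> * ((\<rho>^4 - 6 * \<rho>\<^sup>2 - 3) / \<rho>)"
      using \<open>1 \<le> l * \<rho>\<close> \<open>l * \<rho> \<le> \<rho>\<close> by (intro mult_left_mono quartic_quotient_mono) auto
    also have "\<dots> < l * \<rho> * (8 * X / \<rho>)"
      using \<open>1 \<le> l * \<rho>\<close> \<open>l * \<rho> \<le> \<rho>\<close> \<open>\<rho>^4 - 6 * \<rho>\<^sup>2 - 3 < 8 * X\<close>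
      by (intro mult_strict_left_mono divide_strict_right_mono) auto
    also have "\<dots> = 8 * (l * X)"
      using \<open>0 < \<rho>\<close> by simp
    finally show ?thesis
      by (simp add: w)
  qed
qed

section \<open>Values of \<open>1 + z + z\<^sup>2/2\<close> on the disk\<close>

lemma norm_less_one_iff_Re_Im: "cmod \<zeta> < 1 \<longleftrightarrow> (Re \<zeta>)\<^sup>2 + (Im \<zeta>)\<^sup>2 < 1"
  by (simp add: cmod_def)

lemma unit_disk_shifted_Re_Im:
  assumes "cmod \<zeta> < 1"
  shows "0 < 1 + Re \<zeta>" and "(Im \<zeta>)\<^sup>2 < 2 * (1 + Re \<zeta>) - (1 + Re \<zeta>)\<^sup>2"
proof -
  show "0 < 1 + Re \<zeta>"
    using assms abs_Re_le_cmod[of \<zeta>] by linarith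
  show "(Im \<zeta>)\<^sup>2 < 2 * (1 + Re \<zeta>) - (1 + Re \<zeta>)\<^sup>2"
    using assms by (simp add: norm_less_one_iff_Re_Im power2_eq_square algebra_simps)
qed

lemma Re_car: "Re (1 + \<zeta> + \<zeta>\<^sup>2/2) = ((1 + Re \<zeta>)\<^sup>2 + 1 - (Im \<zeta>)\<^sup>2) / 2"
  by (simp add: Re_power2 power2_eq_square field_simps)

lemma Im_car: "Im (1 + \<zeta> + \<zeta>\<^sup>2/2) = (1 + Re \<zeta>) * Im \<zeta>"
  by (simp add: power2_eq_square algebra_simps)

lemma Re_car_gt:
  assumes "cmod \<zeta> < 1"
  shows "1/4 < Re (1 + \<zeta> + \<zeta>\<^sup>2/2)"
proof -
  have "(Im \<zeta>)\<^sup>2 < 1 - (Re \<zeta>)\<^sup>2"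
    using assms by (simp add: norm_less_one_iff_Re_Im)
  then have "(Re \<zeta> + 1/2)\<^sup>2 + 1/4 < Re (1 + \<zeta> + \<zeta>\<^sup>2/2)"
    by (simp add: Re_power2 power2_eq_square field_simps)
  then show ?thesis
    by (smt (verit) zero_le_power2)
qed

lemma car_sector_real:
  fixes a Y :: real
  assumes "0 < a" and "Y < 2*a - a\<^sup>2"
  shows "20 * a\<^sup>2 * Y < 27 * (a\<^sup>2 + 1 - Y)\<^sup>2"
proof -
  define Q where "Q = 2*a\<^sup>2 - 2*a + 1"
  have "Q = a\<^sup>2 + (a - 1)\<^sup>2"
    by (simp add: Q_def power2_eq_square algebra_simps)
  then have "0 \<le> Q"
    by simp
  moreover have "Q < a\<^sup>2 + 1 - Y"
    using assms(2) by (simp add: Q_def)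
  ultimately have Q_less: "27 * Q\<^sup>2 < 27 * (a\<^sup>2 + 1 - Y)\<^sup>2"
    by (simp add: power_strict_mono)
  have "27 * Q\<^sup>2 - 20 * a\<^sup>2 * (2*a - a\<^sup>2) = (4*a - 3)\<^sup>2 * (8 * (a - 1/4)\<^sup>2 + 5/2)"
    by (simp add: Q_def power2_eq_square algebra_simps)
  moreover have "0 \<le> (4*a - 3)\<^sup>2 * (8 * (a - 1/4)\<^sup>2 + 5/2)"
    by (intro mult_nonneg_nonneg) simp_all
  ultimately have "20 * a\<^sup>2 * (2*a - a\<^sup>2) \<le> 27 * Q\<^sup>2"
    by linarith
  moreover have "20 * a\<^sup>2 * Y \<le> 20 * a\<^sup>2 * (2*a - a\<^sup>2)"
    using assms(2) by (intro mult_left_mono) auto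
  ultimately show ?thesis
    using Q_less by linarith
qed

lemma abs_Im_car_less:
  assumes "cmod \<zeta> < 1"
  shows "\<bar>Im (1 + \<zeta> + \<zeta>\<^sup>2/2)\<bar> < 3 * sqrt (3/5) * Re (1 + \<zeta> + \<zeta>\<^sup>2/2)"
proof -
  define a y where "a = 1 + Re \<zeta>" and "y = Im \<zeta>"
  define T where "T = 3 * sqrt (3/5 :: real)"
  have "T\<^sup>2 = 27/5"
    by (simp add: T_def power_mult_distrib)
  have "20 * (Im (1 + \<zeta> + \<zeta>\<^sup>2/2))\<^sup>2 = 20 * a\<^sup>2 * y\<^sup>2"
    unfolding Im_car by (simp add: a_def y_def power_mult_distrib)
  also have "\<dots> < 27 * (a\<^sup>2 + 1 - y\<^sup>2)\<^sup>2"
    using unit_disk_shifted_Re_Im[OF assms] by (intro car_sector_real) (simp_all add: a_def y_def)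
  also have "\<dots> = 20 * (T * Re (1 + \<zeta> + \<zeta>\<^sup>2/2))\<^sup>2"
    unfolding Re_car by (simp add: a_def y_def power_mult_distrib \<open>T\<^sup>2 = 27/5\<close> power_divide)
  finally have "\<bar>Im (1 + \<zeta> + \<zeta>\<^sup>2/2)\<bar>\<^sup>2 < (T * Re (1 + \<zeta> + \<zeta>\<^sup>2/2))\<^sup>2"
    by simp
  moreover have "0 \<le> T * Re (1 + \<zeta> + \<zeta>\<^sup>2/2)"
    using Re_car_gt[OF assms] by (simp add: T_def)
  ultimately show ?thesis
    unfolding T_def by (rule power_less_imp_less_base)
qed

lemma car_norm_bound_real:
  fixes a Y :: real
  assumes "0 < a" and "0 \<le> Y" and "Y < 2*a - a\<^sup>2"
  shows "(a\<^sup>2 + 1 - Y)\<^sup>2 + 4 * a\<^sup>2 * Y < (3 + sqrt 5) * (a\<^sup>2 + 1 - Y)"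
proof -
  define r where "r = sqrt 5"
  define m where "m = (3 + r) / 4"
  define P where "P = a\<^sup>2 + 1 - Y"
  define d where "d = 2*a - a\<^sup>2 - Y"
  have "r\<^sup>2 = 5" "2 < r"
    using real_less_rsqrt[of 2 5] by (simp_all add: r_def)
  have "d > 0"
    using assms by (simp add: d_def)
  \<comment> \<open>Once \<open>r\<^sup>2 = 5\<close> is used, the part not involving the slack \<open>d\<close> is a nonpositive square
    vanishing at \<open>a = m\<close>: this is why \<open>(3 + \<surd>5)/4\<close> is the optimal constant.\<close>
  have "P\<^sup>2 + 4*a\<^sup>2*Y - 4*m*P
    = - (2*r - 2) * (a - m)\<^sup>2 + (r\<^sup>2 - 5) * ((r + 5)/8 - a) + d * (d - 4*a + 2 - 4*m)"
    unfolding P_def d_def m_def by (simp add: power2_eq_square field_simps)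
  moreover have "(2*r - 2) * (a - m)\<^sup>2 \<ge> 0"
    using \<open>2 < r\<close> by simp
  moreover have "d - 4*a + 2 - 4*m < 0"
    using assms \<open>2 < r\<close> by (simp add: d_def m_def) (smt (verit) zero_le_power2)
  then have "d * (d - 4*a + 2 - 4*m) < 0"
    using \<open>d > 0\<close> by (simp add: mult_pos_neg)
  moreover have "(r\<^sup>2 - 5) * ((r + 5)/8 - a) = 0"
    using \<open>r\<^sup>2 = 5\<close> by simp
  moreover have "4*m*P = (3 + r) * P"
    by (simp add: m_def)
  ultimately have "P\<^sup>2 + 4*a\<^sup>2*Y < (3 + r) * P"
    by linarith
  then show ?thesis
    by (simp only: P_def r_def)
qed

lemma car_in_ball_M:
  assumes "cmod \<zeta> < 1" and "(3 + sqrt 5) / 4 \<le> M"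
  shows "cmod (1 + \<zeta> + \<zeta>\<^sup>2/2 - of_real M) < M"
proof -
  define a y where "a = 1 + Re \<zeta>" and "y = Im \<zeta>"
  define P where "P = a\<^sup>2 + 1 - y\<^sup>2"
  have bound: "P\<^sup>2 + 4 * a\<^sup>2 * y\<^sup>2 < (3 + sqrt 5) * P"
    unfolding P_def a_def y_def using unit_disk_shifted_Re_Im[OF assms(1)]
    by (intro car_norm_bound_real) auto
  have "0 < 3 + sqrt 5"
    by (simp add: add_pos_nonneg)
  with assms(2) have "0 < M"
    by argo
  have "0 \<le> P\<^sup>2 + 4 * a\<^sup>2 * y\<^sup>2"
    by simp
  with bound have "0 < (3 + sqrt 5) * P"
    by linarith
  with \<open>0 < 3 + sqrt 5\<close> have "0 < P"
    by (simp add: zero_less_mult_iff)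
  have "(cmod (1 + \<zeta> + \<zeta>\<^sup>2/2 - of_real M))\<^sup>2 = (P/2 - M)\<^sup>2 + (a * y)\<^sup>2"
    unfolding cmod_power2 minus_complex.sel Re_complex_of_real Im_complex_of_real Re_car Im_car
    by (simp add: P_def a_def y_def)
  also have "\<dots> = (P\<^sup>2 + 4 * a\<^sup>2 * y\<^sup>2) / 4 - M * P + M\<^sup>2"
    by (simp add: power2_eq_square field_simps)
  also have "\<dots> < (3 + sqrt 5) / 4 * P - M * P + M\<^sup>2"
    using bound by simp
  also have "\<dots> \<le> M\<^sup>2"
    using assms(2) \<open>0 < P\<close> by (simp add: mult_right_mono)
  finally show ?thesis
    by (rule power_less_imp_less_base) (use \<open>0 < M\<close> in simp)
qed

section \<open>Classes containing \<open>Scar\<close>\<close>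

lemma Scar_subset_Sstar_ord:
  assumes "\<alpha> \<le> 1/4"
  shows "Scar \<subseteq> Sstar_ord \<alpha>"
  unfolding Scar_def
proof (rule Sstar_subset_Sstar_ord)
  fix \<zeta> :: complex assume "\<zeta> \<in> ball 0 1"
  then have "1/4 < Re (1 + \<zeta> + \<zeta>\<^sup>2/2)"
    by (intro Re_car_gt) simp
  with assms show "\<alpha> < Re (1 + \<zeta> + \<zeta>\<^sup>2/2)"
    by linarith
qed

lemma abs_Im_Ln_less_arctan:
  assumes "0 < Re w" and "\<bar>Im w\<bar> < T * Re w"
  shows "\<bar>Im (Ln w)\<bar> < arctan T"
proof -
  have "w \<noteq> 0"
    using assms(1) by auto
  then have "Im (Ln w) = arctan (Im w / Re w)"
    using Arg_eq_Im_Ln arg_conv_arctan[OF assms(1)] by simp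
  moreover have "\<bar>Im w / Re w\<bar> < T"
    using assms by (simp add: abs_divide pos_divide_less_eq)
  ultimately show ?thesis
    by (simp add: abs_arctan arctan_less_iff)
qed

lemma Cayley_norm_less_1:
  assumes "0 < Re q"
  shows "cmod ((q - 1) / (q + 1)) < 1"
proof -
  have "(cmod (q - 1))\<^sup>2 < (cmod (q + 1))\<^sup>2"
    unfolding cmod_power2 using assms by (simp add: power2_eq_square algebra_simps)
  then have "cmod (q - 1) < cmod (q + 1)"
    by (rule power_less_imp_less_base) simp
  then show ?thesis
    by (simp add: norm_divide divide_less_eq)
qed

lemma Cayley_inverse:
  fixes q :: complex
  assumes "q + 1 \<noteq> 0"
  shows "(1 + (q - 1) / (q + 1)) / (1 - (q - 1) / (q + 1)) = q"
proof -
  have "1 + (q - 1) / (q + 1) = 2 * q / (q + 1)" and "1 - (q - 1) / (q + 1) = 2 / (q + 1)"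
    using assms by (simp_all add: field_simps)
  with assms show ?thesis
    by simp
qed

lemma subord_Cayley_if_Re_pos:
  assumes "q holomorphic_on ball 0 1" and "q 0 = 1" and Re_pos: "\<And>z. z \<in> ball 0 1 \<Longrightarrow> 0 < Re (q z)"
  shows "subord q (\<lambda>z. (1 + z) / (1 - z))"
  unfolding subord_def
proof (intro exI[of _ "\<lambda>z. (q z - 1) / (q z + 1)"] conjI ballI)
  have q_plus_1: "q z + 1 \<noteq> 0" if "z \<in> ball 0 1" for z
    using Re_pos[OF that] by (auto simp: complex_eq_iff)
  then show "(\<lambda>z. (q z - 1) / (q z + 1)) holomorphic_on ball 0 1"
    by (intro holomorphic_intros assms(1)) auto
  show "(\<lambda>z. (q z - 1) / (q z + 1)) ` ball 0 1 \<subseteq> ball 0 1"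
    by (auto intro!: Cayley_norm_less_1 Re_pos)
  show "(q 0 - 1) / (q 0 + 1) = 0"
    using assms(2) by simp
  show "q z = (1 + (q z - 1) / (q z + 1)) / (1 - (q z - 1) / (q z + 1))" if "z \<in> ball 0 1" for z
    using Cayley_inverse[OF q_plus_1[OF that]] by simp
qed

lemma subord_comp_left:
  assumes "subord F G" and "\<And>z. z \<in> ball 0 1 \<Longrightarrow> H z = h (F z)"
  shows "subord H (\<lambda>z. h (G z))"
proof -
  from assms(1) obtain w where w: "w holomorphic_on ball 0 1" "w ` ball 0 1 \<subseteq> ball 0 1" "w 0 = 0"
    and F: "\<forall>z\<in>ball 0 1. F z = G (w z)"
    by (auto simp: subord_def)
  with assms(2) show ?thesis
    unfolding subord_def by (intro exI[of _ w]) auto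
qed

lemma subord_Cayley_powr:
  assumes "p holomorphic_on ball 0 1" and "p 0 = 1" and "0 < \<beta>"
    and Re_pos: "\<And>z. z \<in> ball 0 1 \<Longrightarrow> 0 < Re (p z)"
    and arg_less: "\<And>z. z \<in> ball 0 1 \<Longrightarrow> \<bar>Im (Ln (p z))\<bar> < \<beta> * pi / 2"
  shows "subord p (\<lambda>z. ((1 + z) / (1 - z)) powr of_real \<beta>)"
proof -
  define L where "L z = Ln (p z) / of_real \<beta>" for z
  define q where "q z = exp (L z)" for z
  have Im_L: "\<bar>Im (L z)\<bar> < pi / 2" if "z \<in> ball 0 1" for z
    using arg_less[OF that] \<open>0 < \<beta>\<close>
    by (simp add: L_def Im_divide_of_real abs_divide divide_less_eq mult.commute)
  have "p z \<notin> \<real>\<^sub>\<le>\<^sub>0" if "z \<in> ball 0 1" for z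
    using Re_pos[OF that] by (auto simp: complex_nonpos_Reals_iff)
  then have "L holomorphic_on ball 0 1"
    unfolding L_def using \<open>0 < \<beta>\<close> by (intro holomorphic_intros assms(1)) auto
  then have "q holomorphic_on ball 0 1"
    unfolding q_def by (intro holomorphic_intros)
  moreover have "q 0 = 1"
    using assms(2) by (simp add: q_def L_def)
  moreover have "0 < Re (q z)" if "z \<in> ball 0 1" for z
    using cos_gt_zero_pi[of "Im (L z)"] Im_L[OF that] by (simp add: q_def Re_exp abs_less_iff)
  ultimately have "subord q (\<lambda>z. (1 + z) / (1 - z))"
    by (rule subord_Cayley_if_Re_pos)
  moreover have "p z = q z powr of_real \<beta>" if "z \<in> ball 0 1" for z
  proof -
    have "Ln (q z) = L z"
      using Im_L[OF that] unfolding q_def by (intro Ln_exp) (auto simp: abs_less_iff)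
    then have "q z powr of_real \<beta> = exp (of_real \<beta> * L z)"
      by (simp add: powr_def q_def)
    also have "\<dots> = p z"
    proof -
      have "p z \<noteq> 0"
        using Re_pos[OF that] by auto
      with \<open>0 < \<beta>\<close> show ?thesis
        by (simp add: L_def)
    qed
    finally show ?thesis
      by simp
  qed
  ultimately show ?thesis
    by (rule subord_comp_left)
qed

lemma Scar_subset_SSstar:
  assumes "(2/pi) * arctan (3 * sqrt (3/5)) \<le> \<beta>"
  shows "Scar \<subseteq> SSstar \<beta>"
proof -
  define T where "T = 3 * sqrt (3/5 :: real)"
  have "0 < arctan T"
    by (simp add: T_def)
  moreover have "arctan T \<le> \<beta> * pi / 2"
    using assms by (simp add: T_def field_simps)
  ultimately have "0 < \<beta> * pi / 2"
    by linarith
  then have "0 < \<beta>"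
    using pi_gt_zero by (simp add: zero_less_mult_iff)
  have car: "1/4 < Re (p z) \<and> \<bar>Im (p z)\<bar> < T * Re (p z)"
    if "p ` ball 0 1 \<subseteq> (\<lambda>z. 1 + z + z\<^sup>2/2) ` ball 0 1" and "z \<in> ball 0 1" for p z
  proof -
    from that obtain \<zeta> where "\<zeta> \<in> ball 0 1" and "p z = 1 + \<zeta> + \<zeta>\<^sup>2/2"
      by blast
    then show ?thesis
      using Re_car_gt abs_Im_car_less by (simp add: T_def)
  qed
  show ?thesis
    unfolding Scar_def SSstar_def
  proof (rule Sstar_subset_Sstar_if_subord)
    fix p assume p: "p holomorphic_on ball 0 1" "p 0 = 1" "p ` ball 0 1 \<subseteq> (\<lambda>z. 1 + z + z\<^sup>2/2) ` ball 0 1"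
    show "subord p (\<lambda>z. ((1 + z) / (1 - z)) powr of_real \<beta>)"
    proof (rule subord_Cayley_powr[OF p(1,2) \<open>0 < \<beta>\<close>])
      fix z :: complex assume "z \<in> ball 0 1"
      with p(3) have "1/4 < Re (p z)" and "\<bar>Im (p z)\<bar> < T * Re (p z)"
        using car by blast+
      then show "0 < Re (p z)"
        by linarith
      have "\<bar>Im (Ln (p z))\<bar> < arctan T"
        using \<open>1/4 < Re (p z)\<close> \<open>\<bar>Im (p z)\<bar> < T * Re (p z)\<close> by (intro abs_Im_Ln_less_arctan) auto
      with \<open>arctan T \<le> \<beta> * pi / 2\<close> show "\<bar>Im (Ln (p z))\<bar> < \<beta> * pi / 2"
        by linarith
    qed
  qed
qed

lemma norm_Janowski_inverse_less:
  assumes "1/2 < M" and "cmod (p - of_real M) < M"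
  shows "cmod (p - 1) < cmod (1 - of_real (-(M - 1) / M) * p)"
proof -
  define B X Y where "B = -(M - 1) / M" and "X = Re p" and "Y = Im p"
  have "M * B = 1 - M"
    using assms(1) by (simp add: B_def field_simps)
  have "(cmod (p - of_real M))\<^sup>2 < M\<^sup>2"
    using assms(2) by (intro power_strict_mono) auto
  then have "X\<^sup>2 + Y\<^sup>2 < 2*M*X"
    unfolding cmod_power2 X_def Y_def by (simp add: power2_eq_square algebra_simps)
  with assms(1) have "0 < (2*M - 1) * (2*M*X - X\<^sup>2 - Y\<^sup>2)"
    by (intro mult_pos_pos) auto
  also have "(2*M - 1) * (2*M*X - X\<^sup>2 - Y\<^sup>2) = (M - (M*B)*X)\<^sup>2 + ((M*B)*Y)\<^sup>2 - M\<^sup>2 * ((X - 1)\<^sup>2 + Y\<^sup>2)"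
    unfolding \<open>M * B = 1 - M\<close> by (simp add: power2_eq_square algebra_simps)
  also have "(M - (M*B)*X)\<^sup>2 + ((M*B)*Y)\<^sup>2 = M\<^sup>2 * ((1 - B*X)\<^sup>2 + (B*Y)\<^sup>2)"
    by (simp add: power2_eq_square algebra_simps)
  finally have "M\<^sup>2 * ((X - 1)\<^sup>2 + Y\<^sup>2) < M\<^sup>2 * ((1 - B*X)\<^sup>2 + (B*Y)\<^sup>2)"
    by simp
  then have "(X - 1)\<^sup>2 + Y\<^sup>2 < (1 - B*X)\<^sup>2 + (B*Y)\<^sup>2"
    using assms(1) by (simp add: mult_less_cancel_left_pos)
  then have "(cmod (p - 1))\<^sup>2 < (cmod (1 - of_real B * p))\<^sup>2"
    unfolding cmod_power2 X_def Y_def by simp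
  then show ?thesis
    unfolding B_def by (rule power_less_imp_less_base) simp
qed

lemma subord_Janowski_A1:
  assumes "p holomorphic_on ball 0 1" and "p 0 = 1" and "B \<noteq> 1"
    and "\<And>z. z \<in> ball 0 1 \<Longrightarrow> cmod (p z - 1) < cmod (1 - of_real B * p z)"
  shows "subord p (\<lambda>z. (1 + z) / (1 + of_real B * z))"
  unfolding subord_def
proof (intro exI[of _ "\<lambda>z. (p z - 1) / (1 - of_real B * p z)"] conjI ballI)
  have nz: "1 - of_real B * p z \<noteq> 0" if "z \<in> ball 0 1" for z
    using assms(4)[OF that] by fastforce
  show "(\<lambda>z. (p z - 1) / (1 - of_real B * p z)) holomorphic_on ball 0 1"
    using nz by (intro holomorphic_intros assms(1)) auto
  show "(\<lambda>z. (p z - 1) / (1 - of_real B * p z)) ` ball 0 1 \<subseteq> ball 0 1"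
    using assms(4) nz by (auto simp: norm_divide divide_less_eq)
  show "(p 0 - 1) / (1 - of_real B * p 0) = 0"
    using assms(2) by simp
  fix z :: complex assume "z \<in> ball 0 1"
  define d where "d = 1 - of_real B * p z"
  have "d \<noteq> 0" and "1 - of_real B \<noteq> (0 :: complex)"
    using nz \<open>z \<in> ball 0 1\<close> assms(3) by (auto simp: d_def)
  have "1 + (p z - 1) / d = p z * (1 - of_real B) / d" and "1 + of_real B * ((p z - 1) / d) = (1 - of_real B) / d"
    using \<open>d \<noteq> 0\<close> by (simp_all add: d_def field_simps)
  with \<open>d \<noteq> 0\<close> \<open>1 - of_real B \<noteq> 0\<close> show "p z = (1 + (p z - 1) / d) / (1 + of_real B * ((p z - 1) / d))"
    by simp
qed

lemma Scar_subset_Sstar_AB_1: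
  assumes "(3 + sqrt 5) / 4 \<le> M"
  shows "Scar \<subseteq> Sstar_AB 1 (-(M - 1) / M)"
proof -
  have "0 \<le> sqrt (5 :: real)"
    by simp
  with assms have "1/2 < M"
    by argo
  then have "-(M - 1) / M \<noteq> 1"
    by (simp add: divide_eq_1_iff)
  have "Scar \<subseteq> Sstar (\<lambda>z. (1 + z) / (1 + of_real (-(M - 1) / M) * z))"
    unfolding Scar_def
  proof (rule Sstar_subset_Sstar_if_subord)
    fix p assume p: "p holomorphic_on ball 0 1" "p 0 = 1" "p ` ball 0 1 \<subseteq> (\<lambda>z. 1 + z + z\<^sup>2/2) ` ball 0 1"
    show "subord p (\<lambda>z. (1 + z) / (1 + of_real (-(M - 1) / M) * z))"
    proof (rule subord_Janowski_A1[OF p(1,2) \<open>-(M - 1) / M \<noteq> 1\<close>])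
      fix z :: complex assume "z \<in> ball 0 1"
      with p(3) obtain \<zeta> where "\<zeta> \<in> ball 0 1" "p z = 1 + \<zeta> + \<zeta>\<^sup>2/2"
        by blast
      with assms have "cmod (p z - of_real M) < M"
        using car_in_ball_M by simp
      with \<open>1/2 < M\<close> show "cmod (p z - 1) < cmod (1 - of_real (-(M - 1) / M) * p z)"
        by (rule norm_Janowski_inverse_less)
    qed
  qed
  then show ?thesis
    by (simp add: Sstar_AB_def)
qed

section \<open>Classes contained in \<open>Scar\<close>\<close>

lemma near_three_halves_if_kstar:
  assumes "5/3 \<le> k" and "k * cmod (p - 1) < Re p"
  shows "cmod (p - 3/2) < 1"
proof -
  define X Y r where "X = Re p - 1" and "Y = Im p" and "r = cmod (p - 1)"
  have "r \<ge> 0" and rr: "r\<^sup>2 = X\<^sup>2 + Y\<^sup>2" and "\<bar>X\<bar> \<le> r"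
    using abs_Re_le_cmod[of "p - 1"] by (simp_all add: r_def X_def Y_def cmod_power2)
  have "5/3 * r \<le> k * r"
    using assms(1) \<open>r \<ge> 0\<close> by (intro mult_right_mono) auto
  with assms(2) have lin: "5 * r < 3 * (1 + X)"
    by (simp add: X_def r_def)
  with \<open>\<bar>X\<bar> \<le> r\<close> have "X < 3/2" "-3/8 < X"
    by auto
  then have "(X - 3/2) * (36 * X + 26) \<le> 0"
    by (intro mult_nonpos_nonneg) auto
  then have "9 * (1 + X)\<^sup>2 \<le> 25 * (X + 3/4)"
    by (simp add: power2_eq_square algebra_simps)
  moreover have "(5 * r)\<^sup>2 < (3 * (1 + X))\<^sup>2"
    using lin \<open>r \<ge> 0\<close> by (intro power_strict_mono) auto
  ultimately have "r\<^sup>2 - X + 1/4 < 1"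
    by (simp add: power2_eq_square algebra_simps)
  moreover have "(cmod (p - 3/2))\<^sup>2 = r\<^sup>2 - X + 1/4"
    unfolding cmod_power2 rr by (simp add: X_def Y_def power2_eq_square algebra_simps)
  ultimately have "(cmod (p - 3/2))\<^sup>2 < 1"
    by simp
  then show ?thesis
    by (simp add: abs_square_less_1)
qed

lemma kSstar_subset_Scar:
  assumes "5/3 \<le> k"
  shows "kSstar k \<subseteq> Scar"
proof
  fix f assume "f \<in> kSstar k"
  then have f: "f \<in> classA" "\<forall>z\<in>ball 0 1 - {0}. f z \<noteq> 0"
    and k: "\<forall>z\<in>ball 0 1. k * cmod (zdlog f z - 1) < Re (zdlog f z)"
    by (auto simp: kSstar_def)
  have "subord (zdlog f) (\<lambda>z. 1 + z + z\<^sup>2/2)"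
  proof (rule subord_car_if_cardioid[OF zdlog_holomorphic[OF f] zdlog_0])
    fix z :: complex assume "z \<in> ball 0 1"
    with k assms show "2 * zdlog f z - 1 \<in> cardioid"
      by (intro cardioid_if_near_three_halves near_three_halves_if_kstar) auto
  qed
  with f show "f \<in> Scar"
    by (simp add: Scar_def Sstar_def)
qed

lemma cos_ge_1_minus_sq_div_2: "1 - y\<^sup>2 / 2 \<le> cos (y :: real)"
proof -
  have "\<bar>sin (y/2)\<bar> \<le> \<bar>y/2\<bar>"
    by (rule abs_sin_x_le_abs_x)
  then have "(sin (y/2))\<^sup>2 \<le> (y/2)\<^sup>2"
    by (simp only: abs_le_square_iff)
  moreover have "cos y = 1 - 2 * (sin (y/2))\<^sup>2"
    using cos_double_sin[of "y/2"] by simp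
  ultimately show ?thesis
    by (simp add: power_divide)
qed

lemma convex_on_exp_aux:
  "convex_on {0..2} (\<lambda>x. exp x + (4 * exp 1 - 3) * exp (-x) - (4 * exp 1 - 2) + exp 1 * (2*x - x\<^sup>2))"
proof -
  define e where "e = exp (1::real)"
  define g' where "g' x = exp x - (4 * e - 3) * exp (-x) + e * (2 - 2*x)" for x
  define g'' where "g'' x = exp x + (4 * e - 3) * exp (-x) - 2 * e" for x
  have "1 < e" "e < 3"
    using e_less_272 by (simp_all add: e_def)
  have "((\<lambda>x. exp x + (4 * e - 3) * exp (-x) - (4 * e - 2) + e * (2*x - x\<^sup>2))
      has_real_derivative g' x) (at x)" and "(g' has_real_derivative g'' x) (at x)" for x
    unfolding g'_def g''_def by (rule derivative_eq_intros refl | simp)+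
  moreover have "0 \<le> g'' x" for x
  proof -
    have "0 \<le> (exp x - e)\<^sup>2 + (e - 1) * (3 - e)"
      using \<open>1 < e\<close> \<open>e < 3\<close> by simp
    also have "\<dots> = exp x * g'' x"
      by (simp add: g''_def exp_minus field_simps power2_eq_square)
    finally show ?thesis
      by (simp add: zero_le_mult_iff)
  qed
  ultimately show ?thesis
    unfolding e_def by (intro f''_ge0_imp_convex) auto
qed

lemma exp_aux_nonpos:
  fixes \<sigma> :: real
  assumes "0 \<le> \<sigma>" and "\<sigma> \<le> 2"
  shows "(exp \<sigma> - 1) * (exp \<sigma> - 4 * exp 1 + 3) + exp 1 * exp \<sigma> * (2*\<sigma> - \<sigma>\<^sup>2) \<le> 0"
proof -
  define e where "e = exp (1::real)"
  define g where "g x = exp x + (4 * e - 3) * exp (-x) - (4 * e - 2) + e * (2*x - x\<^sup>2)" for x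
  have "1 < e" "e < 3"
    using e_less_272 by (simp_all add: e_def)
  have "convex_on {0..2} g"
    unfolding g_def[abs_def] e_def by (rule convex_on_exp_aux)
  moreover have "g 0 = 0"
    by (simp add: g_def)
  moreover have "g 2 < 0"
  proof -
    have "exp (2::real) = e\<^sup>2"
      by (simp add: e_def power2_eq_square flip: exp_add)
    with \<open>1 < e\<close> have "e\<^sup>2 * g 2 = (e\<^sup>2 - 1) * ((e - 1) * (e - 3))"
      by (simp add: g_def exp_minus field_simps power2_eq_square)
    also have "\<dots> < 0"
      using \<open>1 < e\<close> \<open>e < 3\<close> by (intro mult_pos_neg) (auto simp: one_less_power)
    finally show ?thesis
      by (simp add: zero_less_mult_iff mult_less_0_iff)
  qed
  ultimately have "g \<sigma> \<le> (1 - \<sigma>/2) * g 0 + (\<sigma>/2) * g 2"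
    using convex_onD_Icc[of 0 2 g "\<sigma>/2"] assms by simp
  also have "\<dots> \<le> 0"
    using assms \<open>g 0 = 0\<close> \<open>g 2 < 0\<close> by (simp add: mult_nonneg_nonpos)
  finally have "exp \<sigma> * g \<sigma> \<le> 0"
    by (simp add: mult_nonneg_nonpos)
  moreover have "exp \<sigma> * g \<sigma> = (exp \<sigma> - 1) * (exp \<sigma> - 4 * e + 3) + e * exp \<sigma> * (2*\<sigma> - \<sigma>\<^sup>2)"
    by (simp add: g_def exp_minus field_simps power2_eq_square)
  ultimately show ?thesis
    by (simp add: e_def)
qed

lemma exp_extremal_real:
  fixes \<sigma> q :: real
  assumes "0 < \<sigma>" and "\<sigma> < 2" and "exp \<sigma> - 1 \<le> q"
    and "q\<^sup>2 < (exp \<sigma> - 1)\<^sup>2 + exp \<sigma> * (2*\<sigma> - \<sigma>\<^sup>2)"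
  shows "exp 1 * q\<^sup>2 < (exp 1 - 1) * ((exp \<sigma>)\<^sup>2 - 1) + 2 * (exp 1 - 1) * q"
proof -
  define e R where "e = exp (1::real)" and "R = exp \<sigma>"
  have "1 < e"
    by (simp add: e_def)
  have "e * q\<^sup>2 < e * ((R - 1)\<^sup>2 + R * (2*\<sigma> - \<sigma>\<^sup>2))"
    using assms(4) \<open>1 < e\<close> by (simp add: R_def)
  also have "\<dots> = (e - 1) * (R\<^sup>2 - 1) + 2 * (e - 1) * (R - 1)
      + ((R - 1) * (R - 4 * e + 3) + e * R * (2*\<sigma> - \<sigma>\<^sup>2))"
    by (simp add: power2_eq_square algebra_simps)
  also have "\<dots> \<le> (e - 1) * (R\<^sup>2 - 1) + 2 * (e - 1) * q"
  proof -
    have "(R - 1) * (R - 4 * e + 3) + e * R * (2*\<sigma> - \<sigma>\<^sup>2) \<le> 0"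
      using exp_aux_nonpos[of \<sigma>] assms(1,2) by (simp add: R_def e_def)
    moreover have "2 * (e - 1) * (R - 1) \<le> 2 * (e - 1) * q"
      using assms(3) \<open>1 < e\<close> by (intro mult_left_mono) (auto simp: R_def)
    ultimately show ?thesis
      by linarith
  qed
  finally show ?thesis
    by (simp add: e_def R_def)
qed

lemma exp_extremal_key:
  assumes "cmod \<zeta> < 1"
  shows "(cmod (of_real (exp 1) * exp \<zeta> - of_real (exp 1)))\<^sup>2
    < (exp 1 - 1)\<^sup>2 + 2 * (exp 1 - 1) * cmod (of_real (exp 1) * exp \<zeta> - 1)"
proof -
  define e where "e = exp (1::real)"
  define E where "E = of_real e * exp \<zeta>"
  define \<sigma> y where "\<sigma> = 1 + Re \<zeta>" and "y = Im \<zeta>"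
  define R q where "R = exp \<sigma>" and "q = cmod (E - 1)"
  have "1 < e"
    by (simp add: e_def)
  have "0 < \<sigma>" and y: "y\<^sup>2 < 2*\<sigma> - \<sigma>\<^sup>2"
    using unit_disk_shifted_Re_Im[OF assms] by (simp_all add: \<sigma>_def y_def)
  have "\<sigma> < 2"
    using assms abs_Re_le_cmod[of \<zeta>] by (simp add: \<sigma>_def)
  have "1 \<le> R"
    using \<open>0 < \<sigma>\<close> by (simp add: R_def)
  have "Re E = R * cos y" and "Im E = R * sin y"
    by (simp_all add: E_def R_def \<sigma>_def y_def e_def Re_exp Im_exp exp_add)
  have norm_E_sub: "(cmod (E - of_real t))\<^sup>2 = R\<^sup>2 - 2 * t * R * cos y + t\<^sup>2" for t
    unfolding cmod_power2 \<open>Re E = R * cos y\<close> \<open>Im E = R * sin y\<close> minus_complex.sel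
      Re_complex_of_real Im_complex_of_real
    by (simp add: power2_diff power_mult_distrib sin_squared_eq algebra_simps)
  have "cmod E = R"
    by (simp add: E_def R_def \<sigma>_def e_def norm_mult norm_exp_eq_Re exp_add)
  then have "R - 1 \<le> q"
    using norm_triangle_ineq2[of E 1] by (simp add: q_def)
  have q2: "q\<^sup>2 = R\<^sup>2 - 2 * R * cos y + 1"
    using norm_E_sub[of 1] by (simp add: q_def)
  have "R * (2 * (1 - cos y)) \<le> R * y\<^sup>2"
    using cos_ge_1_minus_sq_div_2[of y] \<open>1 \<le> R\<close> by (intro mult_left_mono) auto
  moreover have "R * y\<^sup>2 < R * (2*\<sigma> - \<sigma>\<^sup>2)"
    using y \<open>1 \<le> R\<close> by (intro mult_strict_left_mono) auto
  ultimately have "q\<^sup>2 < (R - 1)\<^sup>2 + R * (2*\<sigma> - \<sigma>\<^sup>2)"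
    unfolding q2 by (simp add: power2_eq_square algebra_simps)
  with \<open>0 < \<sigma>\<close> \<open>\<sigma> < 2\<close> \<open>R - 1 \<le> q\<close> have "e * q\<^sup>2 < (e - 1) * (R\<^sup>2 - 1) + 2 * (e - 1) * q"
    unfolding R_def e_def by (rule exp_extremal_real)
  moreover have "(cmod (E - of_real e))\<^sup>2 = e * q\<^sup>2 - (e - 1) * R\<^sup>2 + e\<^sup>2 - e"
    unfolding norm_E_sub q2 by (simp add: power2_eq_square algebra_simps)
  ultimately have "(cmod (E - of_real e))\<^sup>2 < (e - 1)\<^sup>2 + 2 * (e - 1) * q"
    by (simp add: power2_eq_square algebra_simps)
  then show ?thesis
    by (simp add: E_def e_def q_def)
qed

lemma exp_extremal_in_cardioid:
  assumes "cmod \<zeta> < 1"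
  shows "(of_real (exp 1) * exp \<zeta> - 1) / of_real (exp 1 - 1) \<in> cardioid"
proof -
  define k E where "k = exp (1::real) - 1" and "E = of_real (exp 1) * exp \<zeta>"
  define v where "v = (E - 1) / of_real k"
  have "0 < k"
    by (simp add: k_def)
  have "v - 1 = (E - of_real (exp 1)) / of_real k"
    using \<open>0 < k\<close> by (simp add: v_def k_def field_simps)
  then have "(cmod (v - 1))\<^sup>2 = (cmod (E - of_real (exp 1)))\<^sup>2 / k\<^sup>2"
    using \<open>0 < k\<close> by (simp add: norm_divide power_divide)
  also have "\<dots> < (k\<^sup>2 + 2 * k * cmod (E - 1)) / k\<^sup>2"
    using exp_extremal_key[OF assms] \<open>0 < k\<close>
    by (intro divide_strict_right_mono) (simp_all add: E_def k_def)
  also have "\<dots> = 1 + 2 * cmod v"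
    using \<open>0 < k\<close> by (simp add: v_def norm_divide power2_eq_square field_simps)
  finally show ?thesis
    by (simp add: cardioid_def v_def E_def k_def)
qed

lemma exp_in_cardioid:
  assumes "cmod \<zeta> < 1" and "(exp 1 - 2) / (2 * (exp 1 - 1)) \<le> \<alpha>" and "\<alpha> \<le> 1"
  shows "2 * (of_real \<alpha> + (1 - of_real \<alpha>) * exp \<zeta>) - 1 \<in> cardioid"
proof -
  define e where "e = exp (1::real)"
  define l where "l = 2 * (1 - \<alpha>) * (e - 1) / e"
  have "1 < e"
    by (simp add: e_def)
  have "0 \<le> l"
    using \<open>1 < e\<close> assms(3) by (simp add: l_def)
  moreover have "l \<le> 1"
    using \<open>1 < e\<close> assms(2) by (simp add: l_def e_def field_simps)
  moreover have "(of_real e :: complex) \<noteq> 0" and "(of_real e :: complex) \<noteq> 1"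
    using \<open>1 < e\<close> by auto
  then have "2 * (of_real \<alpha> + (1 - of_real \<alpha>) * exp \<zeta>) - 1
      = 1 + of_real l * ((of_real e * exp \<zeta> - 1) / of_real (e - 1) - 1)"
    by (simp add: l_def field_simps)
  ultimately show ?thesis
    using cardioid_starlike[OF exp_extremal_in_cardioid[OF assms(1)]] by (simp add: e_def)
qed

lemma Sstar_e_subset_Scar:
  assumes "(exp 1 - 2) / (2 * (exp 1 - 1)) \<le> \<alpha>" and "\<alpha> \<le> 1"
  shows "Sstar_e \<alpha> \<subseteq> Scar"
  unfolding Sstar_e_def using assms by (intro Sstar_subset_Scar exp_in_cardioid) auto

lemma csqrt_1_plus_near_1:
  assumes "cmod \<zeta> < 1"
  shows "cmod (csqrt (1 + \<zeta>) - 1) < 1"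
proof -
  define s where "s = csqrt (1 + \<zeta>)"
  define a b where "a = Re s" and "b = Im s"
  have "a \<ge> 0"
    unfolding a_def s_def by (rule Re_csqrt)
  have "(cmod \<zeta>)\<^sup>2 = (cmod (s\<^sup>2 - 1))\<^sup>2"
    by (simp add: s_def)
  also have "\<dots> = (a\<^sup>2 + b\<^sup>2)\<^sup>2 - 2 * (a\<^sup>2 - b\<^sup>2) + 1"
    unfolding cmod_power2 a_def b_def by (simp add: power2_eq_square algebra_simps)
  finally have "(cmod \<zeta>)\<^sup>2 = (a\<^sup>2 + b\<^sup>2)\<^sup>2 - 2 * (a\<^sup>2 - b\<^sup>2) + 1" .
  moreover have "(cmod \<zeta>)\<^sup>2 < 1"
    using assms by (simp add: abs_square_less_1)
  ultimately have "(a\<^sup>2 + b\<^sup>2)\<^sup>2 < 2 * (a\<^sup>2 - b\<^sup>2)"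
    by linarith
  also have "\<dots> \<le> (2 * a)\<^sup>2"
    by (simp add: power2_eq_square)
  finally have "a\<^sup>2 + b\<^sup>2 < 2 * a"
    by (rule power_less_imp_less_base) (use \<open>a \<ge> 0\<close> in simp)
  then have "(cmod (s - 1))\<^sup>2 < 1"
    unfolding cmod_power2 a_def b_def by (simp add: power2_eq_square algebra_simps)
  then show ?thesis
    by (simp add: s_def abs_square_less_1)
qed

lemma Sstar_L_subset_Scar:
  assumes "1/2 \<le> \<alpha>" and "\<alpha> \<le> 1"
  shows "Sstar_L \<alpha> \<subseteq> Scar"
  unfolding Sstar_L_def
proof (rule Sstar_subset_Scar)
  fix \<zeta> :: complex assume "\<zeta> \<in> ball 0 1"
  define s where "s = csqrt (1 + \<zeta>)"
  have "cmod (s - 1) < 1"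
    using \<open>\<zeta> \<in> ball 0 1\<close> by (simp add: s_def csqrt_1_plus_near_1)
  have "cmod (of_real (1 - \<alpha>) * (s - 1)) = (1 - \<alpha>) * cmod (s - 1)"
    using assms by (simp only: norm_mult norm_of_real)
  also have "\<dots> \<le> 1/2 * cmod (s - 1)"
    using assms by (intro mult_right_mono) auto
  also have "\<dots> < 1/2"
    using \<open>cmod (s - 1) < 1\<close> by simp
  finally have "cmod (of_real (1 - \<alpha>) * (s - 1)) + cmod (- 1/2 :: complex) < 1"
    by simp
  moreover have "of_real \<alpha> + (1 - of_real \<alpha>) * s - 3/2 = of_real (1 - \<alpha>) * (s - 1) + (- 1/2)"
    by (simp add: algebra_simps)
  ultimately have "cmod (of_real \<alpha> + (1 - of_real \<alpha>) * s - 3/2) < 1"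
    by (metis norm_triangle_ineq order_le_less_trans)
  then show "2 * (of_real \<alpha> + (1 - of_real \<alpha>) * csqrt (1 + \<zeta>)) - 1 \<in> cardioid"
    unfolding s_def by (rule cardioid_if_near_three_halves)
qed

lemma csqrt_1_plus_near_three_halves:
  assumes "cmod \<zeta> < 3/4"
  shows "cmod (csqrt (1 + \<zeta>) - 3/2) < 1"
proof -
  define s where "s = csqrt (1 + \<zeta>)"
  define a b where "a = Re s" and "b = Im s"
  define r where "r = a\<^sup>2 + b\<^sup>2"
  have "a \<ge> 0"
    unfolding a_def s_def by (rule Re_csqrt)
  have \<zeta>: "\<zeta> = s\<^sup>2 - 1"
    by (simp add: s_def)
  have "(cmod (s\<^sup>2 - 1))\<^sup>2 = r\<^sup>2 - 2 * (a\<^sup>2 - b\<^sup>2) + 1"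
    unfolding cmod_power2 r_def a_def b_def by (simp add: power2_eq_square algebra_simps)
  moreover have "(cmod \<zeta>)\<^sup>2 < (3/4)\<^sup>2"
    using assms by (intro power_strict_mono) auto
  ultimately have sq: "r\<^sup>2 + 2 * r + 7/16 < (2 * a)\<^sup>2"
    unfolding \<zeta> by (simp add: r_def power2_eq_square algebra_simps)
  have "cmod (s\<^sup>2) = r"
    unfolding r_def a_def b_def norm_power cmod_power2 by simp
  with assms norm_triangle_ineq4[of "s\<^sup>2" "s\<^sup>2 - 1"] have "1/4 < r"
    unfolding \<zeta> by simp
  then have "0 \<le> (r - 1/4) * (5/4 * r + 37/16)"
    by simp
  then have "(r + 5/4)\<^sup>2 \<le> 9/4 * (r\<^sup>2 + 2 * r + 7/16)"
    by (simp add: power2_eq_square field_simps)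
  with sq have "(r + 5/4)\<^sup>2 < (3 * a)\<^sup>2"
    by (simp add: power2_eq_square)
  then have "r + 5/4 < 3 * a"
    by (rule power_less_imp_less_base) (use \<open>a \<ge> 0\<close> in simp)
  then have "(cmod (s - 3/2))\<^sup>2 < 1"
    unfolding cmod_power2 by (simp add: r_def a_def b_def power2_eq_square algebra_simps)
  then show ?thesis
    by (simp add: s_def abs_square_less_1)
qed

lemma Sstar_sqrt_subset_Scar:
  assumes "\<bar>c\<bar> \<le> 3/4"
  shows "Sstar_sqrt c \<subseteq> Scar"
  unfolding Sstar_sqrt_def
proof (rule Sstar_subset_Scar)
  fix \<zeta> :: complex assume "\<zeta> \<in> ball 0 1"
  have "\<bar>c\<bar> * cmod \<zeta> \<le> 3/4 * cmod \<zeta>"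
    using assms by (intro mult_right_mono) auto
  with \<open>\<zeta> \<in> ball 0 1\<close> have "\<bar>c\<bar> * cmod \<zeta> < 3/4"
    by simp
  then have "cmod (csqrt (1 + of_real c * \<zeta>) - 3/2) < 1"
    by (intro csqrt_1_plus_near_three_halves) (simp add: norm_mult)
  then show "2 * csqrt (1 + of_real c * \<zeta>) - 1 \<in> cardioid"
    by (rule cardioid_if_near_three_halves)
qed

lemma Janowski_image_in_ball:
  fixes A B :: real
  assumes "cmod \<zeta> < 1" and "B\<^sup>2 < 1" and "B < A"
  shows "cmod ((1 + of_real A * \<zeta>) / (1 + of_real B * \<zeta>) - of_real ((1 - A*B) / (1 - B\<^sup>2)))
    < (A - B) / (1 - B\<^sup>2)"
proof -
  define D where "D = 1 - B\<^sup>2"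
  define w where "w = 1 + of_real B * \<zeta>"
  have "D > 0"
    using assms by (simp add: D_def)
  have "(cmod \<zeta>)\<^sup>2 < 1"
    using assms by (simp add: abs_square_less_1)
  with \<open>D > 0\<close> have "0 < D * (1 - (cmod \<zeta>)\<^sup>2)"
    by simp
  also have "D * (1 - (cmod \<zeta>)\<^sup>2) = (cmod w)\<^sup>2 - (cmod (of_real B + \<zeta>))\<^sup>2"
    unfolding w_def D_def cmod_power2 by (simp add: power2_eq_square algebra_simps)
  finally have "cmod (of_real B + \<zeta>) < cmod w"
    by (simp add: power_less_imp_less_base)
  then have "w \<noteq> 0"
    by auto
  have "(1 + of_real A * \<zeta>) * of_real D - of_real (1 - A*B) * w = of_real (A - B) * (of_real B + \<zeta>)"
    unfolding w_def D_def by (simp add: algebra_simps power2_eq_square)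
  then have "(1 + of_real A * \<zeta>) / w - of_real ((1 - A*B) / D) = of_real ((A - B) / D) * ((of_real B + \<zeta>) / w)"
    using \<open>w \<noteq> 0\<close> \<open>D > 0\<close> by (simp add: field_simps)
  moreover have "cmod (of_real ((A - B) / D) :: complex) = (A - B) / D"
    using \<open>B < A\<close> \<open>D > 0\<close> by (simp only: norm_of_real) simp
  ultimately have "cmod ((1 + of_real A * \<zeta>) / w - of_real ((1 - A*B) / D))
      = (A - B) / D * (cmod (of_real B + \<zeta>) / cmod w)"
    by (simp only: norm_mult norm_divide)
  also have "\<dots> < (A - B) / D * 1"
    using \<open>cmod (of_real B + \<zeta>) < cmod w\<close> \<open>B < A\<close> \<open>D > 0\<close>
    by (intro mult_strict_left_mono) (simp_all add: divide_less_eq)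
  finally show ?thesis
    by (simp add: D_def w_def)
qed

lemma Janowski_disk_near_three_halves:
  fixes A B :: real
  assumes "(1 - B\<^sup>2 < 2 * (1 - A*B) \<and> 2 * (1 - A*B) \<le> 3 * (1 - B\<^sup>2) \<and> 2*A \<le> 1 + B) \<or>
    (3 * (1 - B\<^sup>2) \<le> 2 * (1 - A*B) \<and> 2 * (1 - A*B) < 5 * (1 - B\<^sup>2) \<and> 2*A \<le> 3 + 5*B)"
  shows "B\<^sup>2 < 1" and "(A - B) / (1 - B\<^sup>2) + \<bar>(1 - A*B) / (1 - B\<^sup>2) - 3/2\<bar> \<le> 1"
proof -
  define D where "D = 1 - B\<^sup>2"
  from assms have "D > 0"
    unfolding D_def by (elim disjE conjE) (simp_all add: algebra_simps)
  then show "B\<^sup>2 < 1"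
    by (simp add: D_def)
  then have "\<bar>B\<bar> < 1"
    by (simp add: abs_square_less_1)
  define c r where "c = (1 - A*B) / D" and "r = (A - B) / D"
  from assms have "r + \<bar>c - 3/2\<bar> \<le> 1"
  proof (elim disjE conjE)
    assume "2 * (1 - A*B) \<le> 3 * (1 - B\<^sup>2)" and "2*A \<le> 1 + B"
    then have "c \<le> 3/2"
      using \<open>D > 0\<close> by (simp add: c_def D_def divide_le_eq)
    have "0 \<le> (1 + B) * (1 + B - 2*A)"
      using \<open>\<bar>B\<bar> < 1\<close> \<open>2*A \<le> 1 + B\<close> by simp
    then have "D/2 \<le> (1 - A*B) - (A - B)"
      by (simp add: D_def power2_eq_square field_simps)
    with \<open>D > 0\<close> have "1/2 \<le> c - r"
      by (simp add: c_def r_def le_divide_eq flip: diff_divide_distrib)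
    with \<open>c \<le> 3/2\<close> show ?thesis
      by simp
  next
    assume "3 * (1 - B\<^sup>2) \<le> 2 * (1 - A*B)" and "2*A \<le> 3 + 5*B"
    then have "3/2 \<le> c"
      using \<open>D > 0\<close> by (simp add: c_def D_def le_divide_eq)
    have "0 \<le> (1 - B) * (3 + 5*B - 2*A)"
      using \<open>\<bar>B\<bar> < 1\<close> \<open>2*A \<le> 3 + 5*B\<close> by simp
    then have "(1 - A*B) + (A - B) \<le> 5/2 * D"
      by (simp add: D_def power2_eq_square algebra_simps)
    with \<open>D > 0\<close> have "c + r \<le> 5/2"
      by (simp add: c_def r_def divide_le_eq flip: add_divide_distrib)
    with \<open>3/2 \<le> c\<close> show ?thesis
      by simp
  qed
  then show "(A - B) / (1 - B\<^sup>2) + \<bar>(1 - A*B) / (1 - B\<^sup>2) - 3/2\<bar> \<le> 1"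
    unfolding c_def r_def D_def .
qed

lemma Sstar_AB_subset_Scar:
  fixes A B :: real
  assumes "B < A"
    and "(1 - B\<^sup>2 < 2 * (1 - A*B) \<and> 2 * (1 - A*B) \<le> 3 * (1 - B\<^sup>2) \<and> 2*A \<le> 1 + B) \<or>
      (3 * (1 - B\<^sup>2) \<le> 2 * (1 - A*B) \<and> 2 * (1 - A*B) < 5 * (1 - B\<^sup>2) \<and> 2*A \<le> 3 + 5*B)"
  shows "Sstar_AB A B \<subseteq> Scar"
  unfolding Sstar_AB_def
proof (rule Sstar_subset_Scar)
  fix \<zeta> :: complex assume "\<zeta> \<in> ball 0 1"
  define p where "p = (1 + of_real A * \<zeta>) / (1 + of_real B * \<zeta>)"
  define c r where "c = (1 - A*B) / (1 - B\<^sup>2)" and "r = (A - B) / (1 - B\<^sup>2)"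
  have "B\<^sup>2 < 1"
    using assms(2) by (rule Janowski_disk_near_three_halves(1))
  with \<open>\<zeta> \<in> ball 0 1\<close> \<open>B < A\<close> have "cmod (p - of_real c) < r"
    unfolding p_def c_def r_def by (intro Janowski_image_in_ball) simp_all
  moreover have "cmod (of_real c - 3/2 :: complex) = \<bar>c - 3/2\<bar>"
    using norm_of_real[of "c - 3/2", where 'a = complex] by simp
  moreover have "cmod (p - 3/2) \<le> cmod (p - of_real c) + cmod (of_real c - 3/2 :: complex)"
    by (rule norm_diff_triangle_le[OF order.refl order.refl])
  ultimately have "cmod (p - 3/2) < r + \<bar>c - 3/2\<bar>"
    by linarith
  also have "\<dots> \<le> 1"
    unfolding c_def r_def using assms(2) by (rule Janowski_disk_near_three_halves(2))
  finally show "2 * ((1 + of_real A * \<zeta>) / (1 + of_real B * \<zeta>)) - 1 \<in> cardioid"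
    unfolding p_def by (rule cardioid_if_near_three_halves)
qed

theorem theorem3p1:
  shows "(\<forall>\<alpha>::real. 0 \<le> \<alpha> \<and> \<alpha> \<le> 1/4 \<longrightarrow> Scar \<subseteq> Sstar_ord \<alpha>)
   \<and> (\<forall>\<beta>::real. (2/pi) * arctan (3 * sqrt (3/5)) \<le> \<beta> \<and> \<beta> \<le> 1 \<longrightarrow> Scar \<subseteq> SSstar \<beta>)
   \<and> (\<forall>k::real. k \<ge> 5/3 \<longrightarrow> kSstar k \<subseteq> Scar)
   \<and> (\<forall>\<alpha>::real. (exp 1 - 2) / (2 * (exp 1 - 1)) \<le> \<alpha> \<and> \<alpha> < 1 \<longrightarrow> Sstar_e \<alpha> \<subseteq> Scar)
   \<and> (\<forall>\<alpha>::real. 1/2 \<le> \<alpha> \<and> \<alpha> < 1 \<longrightarrow> Sstar_L \<alpha> \<subseteq> Scar)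
   \<and> (\<forall>c::real. 0 < c \<and> c \<le> 3/4 \<longrightarrow> Sstar_sqrt c \<subseteq> Scar)
   \<and> (\<forall>A B::real. -1 < B \<and> B < A \<and> A \<le> 1 \<and>
        ((1 - B^2 < 2 * (1 - A*B) \<and> 2 * (1 - A*B) \<le> 3 * (1 - B^2) \<and> 2*A \<le> 1 + B) \<or>
         (3 * (1 - B^2) \<le> 2 * (1 - A*B) \<and> 2 * (1 - A*B) < 5 * (1 - B^2) \<and> 2*A \<le> 3 + 5*B))
        \<longrightarrow> Sstar_AB A B \<subseteq> Scar)
   \<and> (\<forall>M::real. M \<ge> (3 + sqrt 5) / 4 \<longrightarrow> Scar \<subseteq> Sstar_AB 1 (-(M - 1) / M))"
proof (intro conjI allI impI)
  show "Scar \<subseteq> Sstar_ord \<alpha>" if "0 \<le> \<alpha> \<and> \<alpha> \<le> 1/4" for \<alpha> :: real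
    using that by (intro Scar_subset_Sstar_ord) simp
  show "Scar \<subseteq> SSstar \<beta>" if "(2/pi) * arctan (3 * sqrt (3/5)) \<le> \<beta> \<and> \<beta> \<le> 1" for \<beta> :: real
    using that by (intro Scar_subset_SSstar) simp
  show "kSstar k \<subseteq> Scar" if "k \<ge> 5/3" for k :: real
    using that by (rule kSstar_subset_Scar)
  show "Sstar_e \<alpha> \<subseteq> Scar" if "(exp 1 - 2) / (2 * (exp 1 - 1)) \<le> \<alpha> \<and> \<alpha> < 1" for \<alpha> :: real
    using that by (intro Sstar_e_subset_Scar) simp_all
  show "Sstar_L \<alpha> \<subseteq> Scar" if "1/2 \<le> \<alpha> \<and> \<alpha> < 1" for \<alpha> :: real
    using that by (intro Sstar_L_subset_Scar) simp_all
  show "Sstar_sqrt c \<subseteq> Scar" if "0 < c \<and> c \<le> 3/4" for c :: real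
    using that by (intro Sstar_sqrt_subset_Scar) simp
  show "Sstar_AB A B \<subseteq> Scar"
    if "-1 < B \<and> B < A \<and> A \<le> 1 \<and>
      ((1 - B^2 < 2 * (1 - A*B) \<and> 2 * (1 - A*B) \<le> 3 * (1 - B^2) \<and> 2*A \<le> 1 + B) \<or>
       (3 * (1 - B^2) \<le> 2 * (1 - A*B) \<and> 2 * (1 - A*B) < 5 * (1 - B^2) \<and> 2*A \<le> 3 + 5*B))"
    for A B :: real
    using that by (intro Sstar_AB_subset_Scar) simp_all
  show "Scar \<subseteq> Sstar_AB 1 (-(M - 1) / M)" if "M \<ge> (3 + sqrt 5) / 4" for M :: real
    using that by (rule Scar_subset_Sstar_AB_1)
qed

end
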